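(* For every $c_*\in(0,1/8]$ there exist constants $C,c,c'>0$ (depending only on $c_*$, $s$ and the $\lambda_i$) such that the following holds. Let $\varepsilon,\delta\in(0,1]$, $\nu>0$, $R\geq1$, frequencies $\mathbf{z}_1,\dots,\mathbf{z}_R\in\mathbb{Z}_M\times\mathbb{Z}_{M^2}$ with phases $\phi_1,\dots,\phi_R$, assume $N\geq(2/(\varepsilon\delta))^{CR^3}$, and let $(q,U,V,(r_n),P,(Q_n))$ be a linearization system with parameter $c_*$ for $(\varepsilon,\delta,\phi_1,\dots,\phi_R)$, with associated smoothing $h\mapsto\widetilde h$. Let $A\subseteq[N]$ have density $\delta=|A|/N$ and suppose $$\Big\|\frac{\widetilde{f_A}}{\delta}\Big\|_{L^2(N)}^2\geq\nu.$$ If $\varepsilon\leq c\,\nu\delta$, then there exists an arithmetic progression $Q\subseteq[N]$ such that $$\frac{|A\cap Q|}{|Q|}\geq(1+\nu/2)\,\delta,\qquad |Q|\geq N^{c'/R^3}.$$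
   Context: $[N]=\{1,\dots,N\}$, $\|x\|$ is the distance from $x$ to the nearest integer. $M$ is a prime with $Y\leq M\leq 2Y$, $Y=2(|\lambda_1|+\dots+|\lambda_s|)N$, for fixed nonzero integers $\lambda_1,\dots,\lambda_s$. For $\mathbf{z}_i=(x_i,y_i)$, $\phi_i(n)=\frac{x_i}{M}n+\frac{y_i}{M^2}n^2$. $f_A=1_A-\delta1_{[N]}$ and $\|g\|_{L^2(N)}=\big(\frac1N\sum_{n=1}^N|g(n)|^2\big)^{1/2}$. An arithmetic progression is a set $\{u+dj:j\in[L]\}$ with integers $u$, $d\geq1$, $L\geq1$. A linearization system with parameter $c_*$ for $(\varepsilon,\delta,\phi_1,\dots,\phi_R)$ consists of integers $q\geq1$, $U,V\geq1$, $r_n\geq1$ ($n\in\mathbb{Z}$) with $N^{c_*/R^2}\leq U\leq 2N^{c_*/R^2}$, $U^{c_*/R}\leq V\leq 2U^{c_*/R}$, $q\leq N^{1/4}$, $r_n\leq U^{1/4}$, together with $P=\{q,2q,\dots,Uq\}$ and $Q_n=\{qr_n,2qr_n,\dots,Vqr_n\}$, such that $\|\phi_i(n+m+k)-\phi_i(n+m)\|\leq\varepsilon\delta$ for all $n\in[N]$, $m\in P$, $k\in Q_n$, $i\in[R]$. The associated smoothing of $h:\mathbb{Z}\to\mathbb{C}$ supported in $[N]$ is $\widetilde h:[N]\to\mathbb{C}$, $\widetilde h(n)=\frac{1}{|P|}\sum_{m\in P}\frac{1}{|Q_{n-m}|}\sum_{k\in Q_{n-m}}h(n+k)$. *)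

theory Defs
  imports "HOL-Computational_Algebra.Primes" Complex_Main
begin

definition dist_int :: "real \<Rightarrow> real" where
  "dist_int x = \<bar>x - real_of_int (round x)\<bar>"

text \<open>Phase attached to the frequency (x, y) in Z_M x Z_{M^2}.\<close>
definition phase :: "nat \<Rightarrow> int \<Rightarrow> int \<Rightarrow> int \<Rightarrow> real" where
  "phase M x y n = real_of_int x / real M * real_of_int n
                  + real_of_int y / (real M)^2 * (real_of_int n)^2"

definition linP :: "nat \<Rightarrow> nat \<Rightarrow> int set" where
  "linP q U = (\<lambda>j. int q * j) ` {1..int U}"

definition linQ :: "nat \<Rightarrow> nat \<Rightarrow> (int \<Rightarrow> nat) \<Rightarrow> int \<Rightarrow> int set" where
  "linQ q V r n = (\<lambda>j. int q * int (r n) * j) ` {1..int V}"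

text \<open>Linearization system with parameter cs for (eps, delta, phi_1..phi_R),
  where phi_i = phase M (x i) (y i).\<close>
definition lin_system ::
  "real \<Rightarrow> nat \<Rightarrow> real \<Rightarrow> real \<Rightarrow> nat \<Rightarrow> nat \<Rightarrow> (nat \<Rightarrow> int) \<Rightarrow> (nat \<Rightarrow> int)
   \<Rightarrow> nat \<Rightarrow> nat \<Rightarrow> nat \<Rightarrow> (int \<Rightarrow> nat) \<Rightarrow> bool" where
  "lin_system cs N \<epsilon> \<delta> M R x y q U V r \<longleftrightarrow>
     q \<ge> 1 \<and> U \<ge> 1 \<and> V \<ge> 1 \<and> (\<forall>n. r n \<ge> 1) \<and>
     real N powr (cs / real R ^ 2) \<le> real U \<and> real U \<le> 2 * real N powr (cs / real R ^ 2) \<and>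
     real U powr (cs / real R) \<le> real V \<and> real V \<le> 2 * real U powr (cs / real R) \<and>
     real q \<le> real N powr (1/4) \<and> (\<forall>n. real (r n) \<le> real U powr (1/4)) \<and>
     (\<forall>n\<in>{1..int N}. \<forall>m\<in>linP q U. \<forall>k\<in>linQ q V r n. \<forall>i\<in>{1..R}.
        dist_int (phase M (x i) (y i) (n + m + k) - phase M (x i) (y i) (n + m)) \<le> \<epsilon> * \<delta>)"

definition smoothing :: "nat \<Rightarrow> nat \<Rightarrow> nat \<Rightarrow> (int \<Rightarrow> nat) \<Rightarrow> (int \<Rightarrow> real) \<Rightarrow> int \<Rightarrow> real" where
  "smoothing q U V r h n =
     (1 / real (card (linP q U))) * (\<Sum>m\<in>linP q U.
        (1 / real (card (linQ q V r (n - m)))) * (\<Sum>k\<in>linQ q V r (n - m). h (n + k)))"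

definition balanced_fn :: "int set \<Rightarrow> real \<Rightarrow> nat \<Rightarrow> int \<Rightarrow> real" where
  "balanced_fn A \<delta> N n = (if n \<in> A then 1 else 0) - \<delta> * (if n \<in> {1..int N} then 1 else 0)"

definition L2N_sq :: "nat \<Rightarrow> (int \<Rightarrow> real) \<Rightarrow> real" where
  "L2N_sq N g = (1 / real N) * (\<Sum>n\<in>{1..int N}. (g n)^2)"

definition is_AP :: "int set \<Rightarrow> bool" where
  "is_AP Q \<longleftrightarrow> (\<exists>u d L. d \<ge> 1 \<and> L \<ge> 1 \<and> Q = {u + d * j | j. j \<in> {1..L}})"

end

theory Submission
  imports Defs
begin

text \<open>
  Write \<open>f = f_A\<close> and \<open>a\<close> for its smoothing.  Each inner average of the smoothing at
  \<open>n\<close> is an average of \<open>f\<close> over a translate \<open>n + Q_k\<close>, an arithmetic progression of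
  length \<open>V\<close>.  Suppose no progression of length \<open>V\<close> in \<open>[N]\<close> has relative density at
  least \<open>(1 + \<nu>/2) \<delta>\<close> in \<open>A\<close>.  Then, with \<open>T = qUV\<close> bounding the length of every window:
  \<^item> \<open>-\<delta> \<le> a \<le> 1\<close> everywhere, and \<open>a n \<le> \<nu>\<delta>/2\<close> whenever \<open>1 \<le> n \<le> N - T\<close>;
  \<^item> the sum of \<open>a\<close> over \<open>[N]\<close> is small: \<open>f\<close> has mean zero, and after the change of
    variables \<open>n \<mapsto> n - m\<close> the smoothing becomes an average of translates of \<open>f\<close> along
    \<open>P\<close>, each shifted by at most \<open>q r_n V \<le> q U^(1/4) V\<close>, which only costs a telescoping
    error of relative size \<open>U^(1/4) V / U\<close>.
  Since \<open>a\<^sup>2 \<le> (\<mu> - \<delta>) a + \<mu> \<delta>\<close> for \<open>-\<delta> \<le> a \<le> \<mu>\<close>, these facts bound the sum of \<open>a\<^sup>2\<close> by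
  about \<open>(3/4) \<nu> \<delta>\<^sup>2 N\<close>, contradicting the hypothesis that the mean square of \<open>a/\<delta>\<close> is at
  least \<open>\<nu>\<close>.  The size hypothesis on \<open>N\<close> makes every error term negligible.  The constants are
  \<open>C = 16/c_*\<close>, \<open>c = 1\<close> and \<open>c' = c_*\<^sup>2\<close>, because \<open>V \<ge> N^(c_*\<^sup>2/R^3)\<close>.
\<close>

section \<open>The sets \<open>P\<close> and \<open>Q\<^sub>n\<close> and the smoothing as a double average\<close>

lemma sum_linP:
  assumes "q \<ge> 1"
  shows "sum g (linP q U) = (\<Sum>i=1..U. g (int q * int i))"
proof -
  have "{1..int U} = int ` {1..U}" by (simp add: image_int_atLeastAtMost)
  then have "linP q U = (\<lambda>i. int q * int i) ` {1..U}"
    unfolding linP_def image_comp by (simp add: comp_def image_image)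
  moreover have "inj_on (\<lambda>i. int q * int i) {1..U}"
    using assms by (auto simp: inj_on_def)
  ultimately show ?thesis by (simp add: sum.reindex)
qed

lemma sum_linQ:
  assumes "q \<ge> 1" "r n \<ge> 1"
  shows "sum g (linQ q V r n) = (\<Sum>j=1..V. g (int q * int (r n) * int j))"
proof -
  have "{1..int V} = int ` {1..V}" by (simp add: image_int_atLeastAtMost)
  then have "linQ q V r n = (\<lambda>j. int q * int (r n) * int j) ` {1..V}"
    unfolding linQ_def image_comp by (simp add: comp_def image_image)
  moreover have "inj_on (\<lambda>j. int q * int (r n) * int j) {1..V}"
    using assms by (auto simp: inj_on_def)
  ultimately show ?thesis by (simp add: sum.reindex)
qed

lemma card_linP: "q \<ge> 1 \<Longrightarrow> card (linP q U) = U"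
  using sum_linP[of q "\<lambda>_. 1::nat" U] by (simp only: card_eq_sum) simp

lemma card_linQ: "q \<ge> 1 \<Longrightarrow> r n \<ge> 1 \<Longrightarrow> card (linQ q V r n) = V"
  using sum_linQ[of q r n "\<lambda>_. 1::nat" V] by (simp only: card_eq_sum) simp

lemma smoothing_eq:
  assumes "q \<ge> 1" "\<forall>n. r n \<ge> 1" "U \<ge> 1" "V \<ge> 1"
  shows "smoothing q U V r h n = (1 / (real U * real V)) *
     (\<Sum>i=1..U. \<Sum>j=1..V. h (n + int q * int (r (n - int q * int i)) * int j))"
  unfolding smoothing_def using assms
  by (simp add: card_linP card_linQ sum_linP sum_linQ sum_distrib_left)

lemma average_le:
  fixes g :: "'a \<Rightarrow> real"
  assumes "card S > 0" "\<And>x. x \<in> S \<Longrightarrow> g x \<le> b"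
  shows "(1 / real (card S)) * sum g S \<le> b"
proof -
  have "sum g S \<le> real (card S) * b" using sum_bounded_above[of S g b] assms by simp
  then show ?thesis using assms(1) by (simp add: field_simps)
qed

lemma average_ge:
  fixes g :: "'a \<Rightarrow> real"
  assumes "card S > 0" "\<And>x. x \<in> S \<Longrightarrow> b \<le> g x"
  shows "b \<le> (1 / real (card S)) * sum g S"
proof -
  have "real (card S) * b \<le> sum g S" using sum_bounded_below[of S b g] assms by simp
  then show ?thesis using assms(1) by (simp add: field_simps)
qed

lemma smoothing_between:
  fixes h :: "int \<Rightarrow> real" and b B :: real
  assumes "q \<ge> 1" "\<forall>n. r n \<ge> 1" "U \<ge> 1" "V \<ge> 1"
    and h: "\<And>x. b \<le> h x \<and> h x \<le> B"
  shows "b \<le> smoothing q U V r h n \<and> smoothing q U V r h n \<le> B"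
proof -
  have cP: "card (linP q U) > 0" using card_linP assms by simp
  have cQ: "card (linQ q V r m) > 0" for m using card_linQ[of q r m V] assms by simp
  define avg where
    "avg m = (1 / real (card (linQ q V r (n - m)))) * (\<Sum>k\<in>linQ q V r (n - m). h (n + k))" for m
  have "b \<le> avg m" "avg m \<le> B" for m
    unfolding avg_def using h by (blast intro: average_ge[OF cQ] average_le[OF cQ])+
  then show ?thesis
    unfolding smoothing_def avg_def[symmetric]
    by (blast intro: average_ge[OF cP] average_le[OF cP])
qed

section \<open>The mean of the smoothing\<close>

lemma abs_sum_le:
  fixes g :: "'a \<Rightarrow> real"
  assumes "\<forall>x\<in>A. \<bar>g x\<bar> \<le> b"
  shows "\<bar>sum g A\<bar> \<le> real (card A) * b"
  using order_trans[OF sum_abs sum_bounded_above[of A "\<lambda>x. \<bar>g x\<bar>" b]] assms by simp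

lemma sum_swap3:
  "(\<Sum>a\<in>A. \<Sum>b\<in>B. \<Sum>c\<in>C. g a b c) = (\<Sum>b\<in>B. \<Sum>c\<in>C. \<Sum>a\<in>A. g a b c)"
  by (subst sum.swap) (simp add: sum.swap[of _ A])

lemma sum_shift_telescope:
  fixes F :: "int \<Rightarrow> real"
  assumes "\<forall>x. \<bar>F x\<bar> \<le> 1"
  shows "\<bar>(\<Sum>i=1..U. F (int i + int t)) - (\<Sum>i=1..U. F (int i))\<bar> \<le> 2 * real t"
proof (induction t)
  case 0 then show ?case by simp
next
  case (Suc t)
  have "(\<Sum>i=1..U. F (int i + int (Suc t))) - (\<Sum>i=1..U. F (int i + int t))
        = F (int (Suc U) + int t) - F (int 1 + int t)"
    using sum_Suc_diff[of 1 U "\<lambda>i. F (int i + int t)"] by (simp add: sum_subtractf add_ac)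
  moreover have "\<bar>F (int (Suc U) + int t) - F (int 1 + int t)\<bar> \<le> 2"
    using assms[rule_format, of "int (Suc U) + int t"] assms[rule_format, of "int 1 + int t"]
    by linarith
  ultimately show ?case using Suc by simp
qed

lemma sum_translate_window:
  fixes f :: "int \<Rightarrow> real"
  assumes f0: "\<forall>x. x \<notin> {1..int N} \<longrightarrow> f x = 0" and "L + s \<le> 1" "0 \<le> s"
  shows "(\<Sum>n\<in>{L..int N}. f (n + s)) = sum f {1..int N}"
proof -
  have "(\<Sum>n\<in>{L..int N}. f (n + s)) = (\<Sum>x\<in>{L + s..int N + s}. f x)"
    by (rule sum.reindex_bij_witness[where i="\<lambda>x. x - s" and j="\<lambda>n. n + s"]) auto
  also have "\<dots> = sum f {1..int N}"
    by (rule sum.mono_neutral_right) (use assms in auto)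
  finally show ?thesis .
qed

lemma sum_reindex_shifted_window:
  fixes f :: "int \<Rightarrow> real"
  assumes f0: "\<forall>x. x \<notin> {1..int N} \<longrightarrow> f x = 0"
    and g: "\<forall>m. 0 \<le> g m \<and> g m \<le> T" and "L + T \<le> 1" and s: "0 \<le> s" "s \<le> S"
  shows "(\<Sum>n\<in>{L..int N}. f (n + g (n - s))) = (\<Sum>m\<in>{L - S..int N}. f (m + s + g m))"
proof -
  have "(\<Sum>n\<in>{L..int N}. f (n + g (n - s))) = (\<Sum>m\<in>{L - s..int N - s}. f (m + s + g m))"
    by (rule sum.reindex_bij_witness[where j="\<lambda>n. n - s" and i="\<lambda>m. m + s"]) (auto simp: add_ac)
  also have "\<dots> = (\<Sum>m\<in>{L - S..int N}. f (m + s + g m))"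
  proof (rule sum.mono_neutral_left)
    show "\<forall>m\<in>{L - S..int N} - {L - s..int N - s}. f (m + s + g m) = 0"
    proof
      fix m assume "m \<in> {L - S..int N} - {L - s..int N - s}"
      then have "m + s + g m \<notin> {1..int N}" using g[rule_format, of m] \<open>L + T \<le> 1\<close> by auto
      then show "f (m + s + g m) = 0" using f0 by blast
    qed
  qed (use s in auto)
  finally show ?thesis .
qed

lemma sum_smoothing_window:
  fixes f :: "int \<Rightarrow> real"
  assumes f0: "\<forall>x. x \<notin> {1..int N} \<longrightarrow> f x = 0"
    and q: "q \<ge> 1" and r: "\<forall>n. r n \<ge> 1" and U: "U \<ge> 1" and V: "V \<ge> 1"
    and T: "\<forall>n. q * r n * V \<le> T"
  shows "(\<Sum>n\<in>{1 - int T..int N}. smoothing q U V r f n) = (1 / (real U * real V)) *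
     (\<Sum>m\<in>{1 - int T - int q * int U..int N}. \<Sum>j=1..V. \<Sum>i=1..U.
        f (m + int q * int i + int q * int (r m) * int j))"
    (is "_ = _ * (\<Sum>m\<in>?W'. \<Sum>j=1..V. \<Sum>i=1..U. ?G m i j)")
proof -
  let ?W = "{1 - int T..int N}"
  let ?X = "\<lambda>n i j. f (n + int q * int (r (n - int q * int i)) * int j)"
  have reindex: "(\<Sum>n\<in>?W. ?X n i j) = (\<Sum>m\<in>?W'. ?G m i j)" if "i \<in> {1..U}" "j \<in> {1..V}" for i j
  proof -
    have "\<forall>m. 0 \<le> int q * int (r m) * int j \<and> int q * int (r m) * int j \<le> int T"
    proof
      fix m
      have "q * r m * j \<le> q * r m * V" using that by (intro mult_le_mono2) auto
      then have "q * r m * j \<le> T" using T by (metis le_trans)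
      then show "0 \<le> int q * int (r m) * int j \<and> int q * int (r m) * int j \<le> int T"
        by (metis of_nat_0_le_iff of_nat_le_iff of_nat_mult)
    qed
    moreover have "int q * int i \<le> int q * int U" using that by (simp add: mult_left_mono)
    ultimately show ?thesis
      using sum_reindex_shifted_window[OF f0, where g="\<lambda>m. int q * int (r m) * int j"
          and T="int T" and L="1 - int T" and s="int q * int i" and S="int q * int U"]
      by (simp add: add_ac)
  qed
  have "(\<Sum>n\<in>?W. smoothing q U V r f n)
        = (1 / (real U * real V)) * (\<Sum>n\<in>?W. \<Sum>i=1..U. \<Sum>j=1..V. ?X n i j)"
    by (simp add: smoothing_eq[OF q r U V] sum_distrib_left)
  also have "(\<Sum>n\<in>?W. \<Sum>i=1..U. \<Sum>j=1..V. ?X n i j) = (\<Sum>i=1..U. \<Sum>j=1..V. \<Sum>n\<in>?W. ?X n i j)"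
    by (rule sum_swap3)
  also have "\<dots> = (\<Sum>i=1..U. \<Sum>j=1..V. \<Sum>m\<in>?W'. ?G m i j)"
    by (intro sum.cong[OF refl] reindex) auto
  also have "\<dots> = (\<Sum>m\<in>?W'. \<Sum>j=1..V. \<Sum>i=1..U. ?G m i j)"
    by (subst sum.swap) (rule sum_swap3[symmetric])
  finally show ?thesis .
qed

text \<open>If \<open>f\<close> is bounded by 1, supported on \<open>[N]\<close> and has mean zero, the sums of translates
  arising above are small: without the shifts \<open>q r\<^sub>m j\<close> they vanish, and each shift costs
  at most twice its length along \<open>P\<close>.\<close>

lemma sum_translates_bound:
  fixes f :: "int \<Rightarrow> real" and \<rho> :: real
  assumes f1: "\<forall>x. \<bar>f x\<bar> \<le> 1" and f0: "\<forall>x. x \<notin> {1..int N} \<longrightarrow> f x = 0"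
    and fs: "sum f {1..int N} = 0"
    and \<rho>: "\<forall>n. real (r n) \<le> \<rho>" and L: "L + int q * int U \<le> 1"
  shows "\<bar>\<Sum>m\<in>{L..int N}. \<Sum>j=1..V. \<Sum>i=1..U. f (m + int q * int i + int q * int (r m) * int j)\<bar>
         \<le> real (card {L..int N}) * (real V * (2 * \<rho> * real V))"
proof -
  let ?G = "\<lambda>m j i. f (m + int q * int i + int q * int (r m) * int j)"
  let ?H = "\<lambda>m i. f (m + int q * int i)"
  have unshifted: "(\<Sum>m\<in>{L..int N}. \<Sum>j=1..V. \<Sum>i=1..U. ?H m i) = 0"
  proof -
    have "(\<Sum>m\<in>{L..int N}. ?H m i) = 0" if "i \<in> {1..U}" for i
    proof -
      have "int q * int i \<le> int q * int U" using that by (simp add: mult_left_mono)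
      then show ?thesis using sum_translate_window[OF f0, of L "int q * int i"] fs L by simp
    qed
    then have "(\<Sum>j=1..V. \<Sum>i=1..U. \<Sum>m\<in>{L..int N}. ?H m i) = 0"
      by simp
    then show ?thesis
      using sum_swap3[where g="\<lambda>m j i. ?H m i" and A="{L..int N}" and B="{1..V}" and C="{1..U}"]
      by simp
  qed
  have shift: "\<bar>(\<Sum>i=1..U. ?G m j i) - (\<Sum>i=1..U. ?H m i)\<bar> \<le> 2 * \<rho> * real V"
    if "j \<in> {1..V}" for m j
  proof -
    let ?F = "\<lambda>x. f (m + int q * x)"
    have "?G m j i = ?F (int i + int (r m * j))" for i
      by (simp add: distrib_left add.assoc mult.assoc)
    then have "\<bar>(\<Sum>i=1..U. ?G m j i) - (\<Sum>i=1..U. ?H m i)\<bar> \<le> 2 * real (r m * j)"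
      using sum_shift_telescope[where F="?F" and U=U and t="r m * j"] f1 by simp
    also have "real (r m * j) \<le> \<rho> * real V"
      using \<rho>[rule_format, of m] that by (simp add: mult_mono)
    finally show ?thesis by simp
  qed
  have "(\<Sum>m\<in>{L..int N}. \<Sum>j=1..V. \<Sum>i=1..U. ?G m j i)
        = (\<Sum>m\<in>{L..int N}. \<Sum>j=1..V. (\<Sum>i=1..U. ?G m j i) - (\<Sum>i=1..U. ?H m i))"
    using unshifted by (simp add: sum_subtractf)
  also have "\<bar>\<dots>\<bar> \<le> real (card {L..int N}) * (real V * (2 * \<rho> * real V))"
  proof (intro abs_sum_le ballI)
    fix m
    show "\<bar>\<Sum>j=1..V. (\<Sum>i=1..U. ?G m j i) - (\<Sum>i=1..U. ?H m i)\<bar> \<le> real V * (2 * \<rho> * real V)"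
      using abs_sum_le[of "{1..V}" "\<lambda>j. (\<Sum>i=1..U. ?G m j i) - (\<Sum>i=1..U. ?H m i)"] shift
      by simp
  qed
  finally show ?thesis .
qed

text \<open>The error term in the mean of the smoothing, with \<open>\<rho>\<close> a bound for all \<open>r\<^sub>n\<close>.\<close>

definition smoothing_mean_error :: "nat \<Rightarrow> nat \<Rightarrow> nat \<Rightarrow> nat \<Rightarrow> nat \<Rightarrow> real \<Rightarrow> real" where
  "smoothing_mean_error N q U V T \<rho> = real T + real (N + T + q * U) * (2 * \<rho> * real V / real U)"

lemma sum_smoothing_small:
  fixes f :: "int \<Rightarrow> real" and \<rho> :: real
  assumes f1: "\<forall>x. \<bar>f x\<bar> \<le> 1" and f0: "\<forall>x. x \<notin> {1..int N} \<longrightarrow> f x = 0"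
    and fs: "sum f {1..int N} = 0"
    and q: "q \<ge> 1" and r: "\<forall>n. r n \<ge> 1" and U: "U \<ge> 1" and V: "V \<ge> 1"
    and \<rho>: "\<forall>n. real (r n) \<le> \<rho>" and T: "\<forall>n. q * r n * V \<le> T"
  shows "\<bar>\<Sum>n\<in>{1..int N}. smoothing q U V r f n\<bar> \<le> smoothing_mean_error N q U V T \<rho>"
proof -
  let ?sm = "smoothing q U V r f"
  let ?W' = "{1 - int T - int q * int U..int N}"
  have "\<bar>?sm n\<bar> \<le> 1" for n
    using smoothing_between[OF q r U V, where b="-1" and h=f and B=1 and n=n] f1
    by (simp add: abs_le_iff)
  then have boundary: "\<bar>sum ?sm {1 - int T..0}\<bar> \<le> real T"
    using abs_sum_le[of "{1 - int T..0}" ?sm 1] by simp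
  let ?S = "\<Sum>m\<in>?W'. \<Sum>j=1..V. \<Sum>i=1..U. f (m + int q * int i + int q * int (r m) * int j)"
  have "card ?W' = N + T + q * U"
    by (simp only: card_atLeastAtMost_int) (simp add: nat_add_distrib nat_mult_distrib)
  then have "\<bar>?S\<bar> \<le> real (N + T + q * U) * (real V * (2 * \<rho> * real V))"
    using sum_translates_bound[OF f1 f0 fs \<rho>, where L="1 - int T - int q * int U"
        and q=q and U=U and V=V]
    by simp
  then have "\<bar>?S\<bar> / (real U * real V) \<le>
      real (N + T + q * U) * (real V * (2 * \<rho> * real V)) / (real U * real V)"
    by (rule divide_right_mono) simp
  moreover have "\<bar>sum ?sm {1 - int T..int N}\<bar> = \<bar>?S\<bar> / (real U * real V)"
    unfolding sum_smoothing_window[OF f0 q r U V T] by (simp add: abs_mult)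
  ultimately have "\<bar>sum ?sm {1 - int T..int N}\<bar> \<le>
      real (N + T + q * U) * (real V * (2 * \<rho> * real V)) / (real U * real V)"
    by (simp only:)
  also have "\<dots> = real (N + T + q * U) * (2 * \<rho> * real V / real U)"
    using U V by (simp add: field_simps)
  finally have window:
    "\<bar>sum ?sm {1 - int T..int N}\<bar> \<le> real (N + T + q * U) * (2 * \<rho> * real V / real U)" .
  have "sum ?sm {1 - int T..int N} = sum ?sm {1 - int T..0} + sum ?sm {1..int N}"
    by (subst sum.union_disjoint[symmetric]) (auto intro: sum.cong)
  then show ?thesis
    unfolding smoothing_mean_error_def using boundary window by linarith
qed

section \<open>Smoothing is small in the absence of a density increment\<close>

lemma sum_balanced_fn:
  assumes "finite Q" "Q \<subseteq> {1..int N}"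
  shows "(\<Sum>x\<in>Q. balanced_fn A \<delta> N x) = real (card (A \<inter> Q)) - \<delta> * real (card Q)"
proof -
  have "(\<Sum>x\<in>Q. balanced_fn A \<delta> N x) = (\<Sum>x\<in>Q. (if x \<in> A then 1 else 0) - \<delta>)"
    using assms(2) by (intro sum.cong) (auto simp: balanced_fn_def)
  also have "\<dots> = real (card (Q \<inter> A)) - \<delta> * real (card Q)"
    using sum.inter_restrict[OF assms(1), of "\<lambda>_. 1::real" A] by (simp add: sum_subtractf)
  finally show ?thesis by (simp add: Int_commute)
qed

lemma translate_linQ_AP:
  assumes "q \<ge> 1" "r k \<ge> 1" "V \<ge> 1"
  shows "is_AP ((\<lambda>x. n + x) ` linQ q V r k)" "card ((\<lambda>x. n + x) ` linQ q V r k) = V"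
proof -
  let ?d = "int q * int (r k)"
  have "int q \<ge> 1" "int (r k) \<ge> 1" using assms by auto
  then have d: "?d \<ge> 1" using mult_mono[of 1 "int q" 1 "int (r k)"] by simp
  show "is_AP ((\<lambda>x. n + x) ` linQ q V r k)"
    unfolding is_AP_def linQ_def
    by (rule exI[of _ n], rule exI[of _ ?d], rule exI[of _ "int V"])
      (use d assms(3) in \<open>auto simp: image_image intro!: image_eqI\<close>)
  show "card ((\<lambda>x. n + x) ` linQ q V r k) = V"
    using card_image[of "\<lambda>x. n + x" "linQ q V r k"] card_linQ[of q r k V] assms
    by (simp add: inj_on_def)
qed

lemma translate_linQ_subset:
  assumes "q * r k * V \<le> T" "1 \<le> n" "n + int T \<le> int N"
  shows "(\<lambda>x. n + x) ` linQ q V r k \<subseteq> {1..int N}"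
proof
  fix x assume "x \<in> (\<lambda>x. n + x) ` linQ q V r k"
  then obtain j where j: "j \<in> {1..int V}" and x: "x = n + int q * int (r k) * j"
    unfolding linQ_def by auto
  have "int q * int (r k) * j \<le> int q * int (r k) * int V"
    using j by (intro mult_left_mono) auto
  also have "\<dots> \<le> int T" using assms(1) by (metis of_nat_le_iff of_nat_mult)
  moreover have "0 \<le> int q * int (r k) * j" using j by simp
  ultimately show "x \<in> {1..int N}" using x assms(2,3) by auto
qed

lemma smoothing_le_without_increment:
  assumes q: "q \<ge> 1" and U: "U \<ge> 1" and V: "V \<ge> 1" and r: "\<forall>n. r n \<ge> 1"
    and T: "\<forall>n. q * r n * V \<le> T" and n: "1 \<le> n" "n + int T \<le> int N"
    and no_increment: "\<forall>Q. is_AP Q \<longrightarrow> Q \<subseteq> {1..int N} \<longrightarrow> card Q = V \<longrightarrow>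
                  real (card (A \<inter> Q)) / real (card Q) < (1 + \<nu>/2) * \<delta>"
  shows "smoothing q U V r (balanced_fn A \<delta> N) n \<le> \<nu> * \<delta> / 2"
proof -
  let ?f = "balanced_fn A \<delta> N"
  have window: "(1 / real (card (linQ q V r (n - m)))) * (\<Sum>k\<in>linQ q V r (n - m). ?f (n + k))
                \<le> \<nu> * \<delta> / 2" for m
  proof -
    define Q where "Q = (\<lambda>x. n + x) ` linQ q V r (n - m)"
    have AP: "is_AP Q" "card Q = V" unfolding Q_def using translate_linQ_AP q r V by auto
    have QN: "Q \<subseteq> {1..int N}" unfolding Q_def using translate_linQ_subset T n by blast
    have "(\<Sum>k\<in>linQ q V r (n - m). ?f (n + k)) = (\<Sum>x\<in>Q. ?f x)"
      unfolding Q_def by (simp add: sum.reindex inj_on_def)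
    also have "\<dots> = real (card (A \<inter> Q)) - \<delta> * real V"
      using sum_balanced_fn[OF _ QN] AP V by (simp add: card_ge_0_finite)
    finally have "(\<Sum>k\<in>linQ q V r (n - m). ?f (n + k)) = real (card (A \<inter> Q)) - \<delta> * real V" .
    moreover have "real (card (A \<inter> Q)) / real V < (1 + \<nu>/2) * \<delta>"
      using no_increment AP QN by auto
    ultimately show ?thesis using card_linQ[of q r "n - m" V] q r V by (simp add: field_simps)
  qed
  show ?thesis
    unfolding smoothing_def by (rule average_le) (use card_linP[OF q, of U] U window in auto)
qed

section \<open>The variance inequality\<close>

text \<open>For \<open>-\<delta> \<le> a \<le> \<mu>\<close> one has \<open>(a + \<delta>)(\<mu> - a) \<ge> 0\<close>, i.e. \<open>a\<^sup>2\<close> is below the chord.\<close>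

lemma square_le_chord:
  fixes a \<delta> \<mu> :: real
  assumes "- \<delta> \<le> a" "a \<le> \<mu>"
  shows "a\<^sup>2 \<le> (\<mu> - \<delta>) * a + \<mu> * \<delta>"
proof -
  have "0 \<le> (a + \<delta>) * (\<mu> - a)" using assms by simp
  then show ?thesis by (simp add: algebra_simps power2_eq_square)
qed

lemma sum_squares_bound:
  fixes a :: "int \<Rightarrow> real" and \<delta> \<nu> \<eta> :: real and N T :: nat
  assumes \<delta>: "0 < \<delta>" "\<delta> \<le> 1" and \<nu>: "0 < \<nu>"
    and range: "\<forall>n\<in>{1..int N}. - \<delta> \<le> a n \<and> a n \<le> 1"
    and good: "\<forall>n\<in>{1..int N}. n + int T \<le> int N \<longrightarrow> a n \<le> \<nu> * \<delta> / 2"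
    and mean: "\<bar>\<Sum>n\<in>{1..int N}. a n\<bar> \<le> \<eta>"
    and small: "\<eta> + real T \<le> \<delta> * real N / 2"
  shows "(\<Sum>n\<in>{1..int N}. (a n)\<^sup>2) \<le> 3/4 * \<nu> * \<delta>\<^sup>2 * real N + \<eta> + 2 * real T"
proof -
  define G where "G = {n\<in>{1..int N}. n + int T \<le> int N}"
  define B where "B = {1..int N} - G"
  let ?\<mu> = "\<nu> * \<delta> / 2"
  have GN: "G \<subseteq> {1..int N}" unfolding G_def by auto
  then have split: "sum g {1..int N} = sum g G + sum g B" for g :: "int \<Rightarrow> real"
    unfolding B_def by (simp add: sum.subset_diff add.commute)
  have "B \<subseteq> {int N - int T + 1..int N}" unfolding B_def G_def by auto
  then have cB: "real (card B) \<le> real T" using card_mono[of "{int N - int T + 1..int N}" B] by simp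
  have cG: "card G \<le> N" using card_mono[OF _ GN] by simp
  have "\<bar>a n\<bar> \<le> 1" if "n \<in> B" for n using range that \<delta> unfolding B_def by force
  then have "\<bar>sum a B\<bar> \<le> real T" "\<bar>\<Sum>n\<in>B. (a n)\<^sup>2\<bar> \<le> real T"
    using abs_sum_le[of B a 1] abs_sum_le[of B "\<lambda>n. (a n)\<^sup>2" 1] cB
    by (auto simp: abs_square_le_1)
  then have sumG: "\<bar>sum a G\<bar> \<le> \<eta> + real T" and sqB: "(\<Sum>n\<in>B. (a n)\<^sup>2) \<le> real T"
    using split[of a] mean by linarith+
  have "(\<Sum>n\<in>G. (a n)\<^sup>2) \<le> (\<Sum>n\<in>G. (?\<mu> - \<delta>) * a n + ?\<mu> * \<delta>)"
    using range good by (intro sum_mono square_le_chord) (auto simp: G_def)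
  also have "\<dots> = (?\<mu> - \<delta>) * sum a G + real (card G) * (?\<mu> * \<delta>)"
    by (simp add: sum.distrib sum_distrib_left)
  also have "(?\<mu> - \<delta>) * sum a G \<le> (?\<mu> + \<delta>) * (\<eta> + real T)"
  proof -
    have "(?\<mu> - \<delta>) * sum a G \<le> \<bar>?\<mu> - \<delta>\<bar> * \<bar>sum a G\<bar>" by (metis abs_ge_self abs_mult)
    also have "\<dots> \<le> (?\<mu> + \<delta>) * (\<eta> + real T)"
      using sumG \<delta> \<nu> abs_diff_le_iff[of "?\<mu>" \<delta> "?\<mu> + \<delta>"] by (intro mult_mono) auto
    finally show ?thesis .
  qed
  also have "(?\<mu> + \<delta>) * (\<eta> + real T) \<le> ?\<mu> * (\<delta> * real N / 2) + (\<eta> + real T)"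
  proof -
    have "0 \<le> \<eta> + real T" using sumG by linarith
    then have "\<delta> * (\<eta> + real T) \<le> \<eta> + real T" using \<delta> by (simp add: mult_left_le_one_le)
    moreover have "?\<mu> * (\<eta> + real T) \<le> ?\<mu> * (\<delta> * real N / 2)"
      using small \<delta> \<nu> by (intro mult_left_mono) auto
    ultimately show ?thesis by (simp only: distrib_right)
  qed
  also have "real (card G) * (?\<mu> * \<delta>) \<le> real N * (?\<mu> * \<delta>)"
    using cG \<delta> \<nu> by (intro mult_right_mono) auto
  finally have "(\<Sum>n\<in>G. (a n)\<^sup>2) \<le> 3/4 * \<nu> * \<delta>\<^sup>2 * real N + \<eta> + real T"
    by (simp add: power2_eq_square algebra_simps)
  then show ?thesis using split[of "\<lambda>n. (a n)\<^sup>2"] sqB by linarith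
qed

section \<open>Numerical consequences of the linearization system\<close>

lemma lin_scales_large:
  fixes Nr Ur X cs R :: real
  assumes cs: "0 < cs" "cs \<le> 1/8" and R: "R \<ge> 1" and X: "X \<ge> 2"
    and NX: "Nr \<ge> X powr (16 / cs * R^3)" and Ul: "Nr powr (cs / R^2) \<le> Ur"
  shows "Nr \<ge> 1" "Nr powr (1/2) \<ge> 128 * X" "Ur powr (1/2) \<ge> 128 * X"
proof -
  have R2: "R^2 \<ge> 1" using R by (simp add: one_le_power)
  have "1 \<le> X powr (16 / cs * R^3)" using X cs R by (intro ge_one_powr_ge_zero) auto
  then show N1: "Nr \<ge> 1" using NX by linarith
  define p where "p = cs / (2 * R^2)"
  have p: "0 \<le> p" "p \<le> 1/2"
  proof -
    show "0 \<le> p" unfolding p_def using cs R2 by simp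
    have "cs / R^2 \<le> cs" using cs R2 by (simp add: divide_le_eq mult_le_cancel_left1)
    then show "p \<le> 1/2" unfolding p_def using cs by simp
  qed
  have "X^8 = X powr 8" using X by (simp add: powr_realpow)
  also have "\<dots> \<le> X powr (8 * R)" using R X by (intro powr_mono) auto
  also have "X powr (8 * R) = (X powr (16 / cs * R^3)) powr p"
    unfolding powr_powr p_def using cs R2 by (simp add: power2_eq_square power3_eq_cube field_simps)
  also have "\<dots> \<le> Nr powr p" using NX p X by (intro powr_mono2) auto
  finally have X8: "X^8 \<le> Nr powr p" .
  have "128 * X \<le> X^8"
  proof -
    have "(2::real)^7 \<le> X^7" using X by (intro power_mono) auto
    then show ?thesis using X by (simp add: eval_nat_numeral)
  qed
  with X8 have large: "128 * X \<le> Nr powr p" by linarith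
  show "Nr powr (1/2) \<ge> 128 * X"
    using large powr_mono[OF p(2) N1] by linarith
  have "Nr powr p = (Nr powr (cs / R^2)) powr (1/2)"
    unfolding powr_powr p_def by (simp add: mult.commute)
  also have "\<dots> \<le> Ur powr (1/2)" using Ul by (intro powr_mono2) auto
  finally show "Ur powr (1/2) \<ge> 128 * X" using large by linarith
qed

lemma lin_scales_upper:
  fixes Nr Ur Vr qr cs R :: real
  assumes cs: "0 < cs" "cs \<le> 1/8" and R: "R \<ge> 1" and N1: "Nr \<ge> 1" and U1: "Ur \<ge> 1"
    and Uu: "Ur \<le> 2 * Nr powr (cs / R^2)"
    and Vl: "Ur powr (cs / R) \<le> Vr" and Vu: "Vr \<le> 2 * Ur powr (cs / R)"
    and q: "0 \<le> qr" "qr \<le> Nr powr (1/4)"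
  shows "qr * Ur * Vr \<le> 8 * Nr powr (1/2)" "Ur powr (1/4) * Vr \<le> 2 * Ur powr (1/2)"
proof -
  have R2: "R^2 \<ge> 1" using R by (simp add: one_le_power)
  have "cs / R^2 \<le> 1/8" using cs R2 by (simp add: divide_le_eq)
  then have Ub: "Ur \<le> 2 * Nr powr (1/8)" using Uu powr_mono[of "cs / R^2" "1/8" Nr] N1 by linarith
  have "cs / R \<le> 1/8" using cs R by (simp add: divide_le_eq)
  then have UcR: "Ur powr (cs / R) \<le> Ur powr (1/8)" using U1 by (intro powr_mono) auto
  have "Ur powr (1/8) \<le> Ur" using U1 powr_mono[of "1/8" 1 Ur] by simp
  then have Vb: "Vr \<le> 4 * Nr powr (1/8)" using Vu UcR Ub by linarith
  have "qr * Ur * Vr \<le> Nr powr (1/4) * (2 * Nr powr (1/8)) * (4 * Nr powr (1/8))"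
    using q Ub Vb U1 Vl by (intro mult_mono) (auto intro: order_trans[OF _ Vl])
  also have "\<dots> = 8 * (Nr powr (1/4) * Nr powr (1/8) * Nr powr (1/8))" by simp
  also have "Nr powr (1/4) * Nr powr (1/8) * Nr powr (1/8) = Nr powr (1/2)"
    by (simp add: powr_add[symmetric])
  finally show "qr * Ur * Vr \<le> 8 * Nr powr (1/2)" by simp
  have "Ur powr (1/4) * Vr \<le> Ur powr (1/4) * (2 * Ur powr (1/8))"
    using Vu UcR by (intro mult_left_mono) auto
  also have "\<dots> = 2 * (Ur powr (1/4) * Ur powr (1/8))" by simp
  also have "Ur powr (1/4) * Ur powr (1/8) \<le> Ur powr (1/2)"
    unfolding powr_add[symmetric] using U1 by (intro powr_mono) auto
  finally show "Ur powr (1/4) * Vr \<le> 2 * Ur powr (1/2)" by simp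
qed

text \<open>The final numerical comparison, with \<open>s = \<surd>N\<close> and \<open>u = \<surd>U\<close> both at least \<open>256/e\<close>.\<close>

lemma mean_error_arith:
  fixes N T s u e :: real
  assumes e: "0 < e" "e \<le> 1" and s: "s \<ge> 128 * (2 / e)" and u: "u \<ge> 128 * (2 / e)"
    and T: "0 \<le> T" "T \<le> 8 * s" and ss: "s * s = N"
  shows "3 * T + (N + 2 * T) * (4 / u) < N * e / 4"
proof -
  have se: "s * e \<ge> 256" and ue: "u * e \<ge> 256"
    using mult_right_mono[OF s, of e] mult_right_mono[OF u, of e] e by auto
  have "128 * (2 / e) \<ge> 256" using e by (simp add: field_simps)
  then have s0: "s \<ge> 256" and u0: "u > 0" using s u by linarith+
  have N0: "N > 0" using ss s0 by (metis mult_pos_pos less_le_trans zero_less_numeral)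
  have "8 * s \<le> s * s" using s0 by (intro mult_right_mono) auto
  then have TN: "T \<le> N" using T ss by linarith
  have "(N + 2 * T) * (4 / u) \<le> (3 * N) * (4 / u)"
    using TN u0 by (intro mult_right_mono) auto
  moreover have "24 * s \<le> 24 * N * e / 256"
  proof -
    have "24 * s * 256 \<le> 24 * s * (s * e)" using se s0 by (intro mult_left_mono) auto
    then show ?thesis using ss by (simp add: algebra_simps)
  qed
  moreover have "12 * N / u \<le> 12 * N * e / 256"
  proof -
    have "12 * N * 256 \<le> 12 * N * (u * e)" using ue N0 by (intro mult_left_mono) auto
    then show ?thesis using u0 by (simp add: field_simps)
  qed
  moreover have "(3 * N) * (4 / u) = 12 * N / u" by simp
  moreover have "36 * N * e / 256 < N * e / 4" using N0 e by simp
  ultimately show ?thesis using T by linarith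
qed

lemma lin_system_mean_error_small:
  assumes cs: "0 < cs" "cs \<le> 1/8" and R: "R \<ge> 1"
    and lin: "lin_system cs N \<epsilon> \<delta> M R x y q U V r"
    and e: "0 < e" "e \<le> 1" and N: "(2 / e) powr (16 / cs * real R ^ 3) \<le> real N"
  shows "smoothing_mean_error N q U V (q * U * V) (real U powr (1/4)) + 2 * real (q * U * V)
         < e * real N / 4"
proof -
  let ?T = "q * U * V"
  have U1: "real U \<ge> 1" and V1: "V \<ge> 1"
    and Ul: "real N powr (cs / real R ^ 2) \<le> real U" and Uu: "real U \<le> 2 * real N powr (cs / real R ^ 2)"
    and Vl: "real U powr (cs / real R) \<le> real V" and Vu: "real V \<le> 2 * real U powr (cs / real R)"
    and qN: "real q \<le> real N powr (1/4)"
    using lin unfolding lin_system_def by auto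
  have X: "2 / e \<ge> 2" using e by (simp add: field_simps)
  have R': "real R \<ge> 1" using R by simp
  note large = lin_scales_large[OF cs R' X N Ul]
  note upper = lin_scales_upper[OF cs R' large(1) U1 Uu Vl Vu _ qN]
  define sN sU where "sN = real N powr (1/2)" and "sU = real U powr (1/2)"
  have ssN: "sN * sN = real N" and ssU: "sU * sU = real U"
    unfolding sN_def sU_def using large(1) U1 by (simp_all add: powr_add[symmetric])
  have sU0: "sU > 0" unfolding sU_def using U1 by simp
  have "q * U \<le> ?T" using V1 by simp
  then have "real (N + ?T + q * U) \<le> real N + 2 * real ?T" by linarith
  moreover have "2 * real U powr (1/4) * real V / real U \<le> 4 / sU"
  proof -
    have "2 * real U powr (1/4) * real V \<le> 4 * sU" using upper(2) unfolding sU_def by (simp add: mult.commute)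
    then have "2 * real U powr (1/4) * real V / real U \<le> 4 * sU / (sU * sU)"
      unfolding ssU using U1 by (simp add: divide_right_mono)
    then show ?thesis using sU0 by simp
  qed
  ultimately have "smoothing_mean_error N q U V ?T (real U powr (1/4))
                   \<le> real ?T + (real N + 2 * real ?T) * (4 / sU)"
    unfolding smoothing_mean_error_def by (intro add_left_mono mult_mono) auto
  moreover have "3 * real ?T + (real N + 2 * real ?T) * (4 / sU) < real N * e / 4"
    using large(2,3) upper(1) ssN e
    by (intro mean_error_arith) (auto simp: sN_def sU_def)
  ultimately show ?thesis by (simp only: mult.commute[of e])
qed

lemma lin_system_length:
  assumes cs: "0 < cs" and R: "R \<ge> 1" and lin: "lin_system cs N \<epsilon> \<delta> M R x y q U V r"
  shows "real N powr (cs\<^sup>2 / real R ^ 3) \<le> real V"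
proof -
  have Ul: "real N powr (cs / real R ^ 2) \<le> real U" and Vl: "real U powr (cs / real R) \<le> real V"
    using lin unfolding lin_system_def by auto
  have "real N powr (cs\<^sup>2 / real R ^ 3) = (real N powr (cs / real R ^ 2)) powr (cs / real R)"
    unfolding powr_powr by (simp add: power2_eq_square power3_eq_cube)
  also have "\<dots> \<le> real U powr (cs / real R)" using Ul cs R by (intro powr_mono2) auto
  finally show ?thesis using Vl by linarith
qed

section \<open>The density increment\<close>

lemma increment_from_large_smoothing:
  fixes A :: "int set" and \<delta> \<nu> e \<rho> :: real
  assumes q: "q \<ge> 1" and U: "U \<ge> 1" and V: "V \<ge> 1" and r: "\<forall>n. r n \<ge> 1"
    and \<rho>: "\<forall>n. real (r n) \<le> \<rho>" and T: "\<forall>n. q * r n * V \<le> T"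
    and A: "A \<subseteq> {1..int N}" and N: "N \<ge> 1" and dA: "\<delta> = real (card A) / real N"
    and \<delta>: "0 < \<delta>" "\<delta> \<le> 1" and \<nu>: "0 < \<nu>"
    and L2: "\<nu> \<le> L2N_sq N (\<lambda>n. smoothing q U V r (balanced_fn A \<delta> N) n / \<delta>)"
    and err: "smoothing_mean_error N q U V T \<rho> + 2 * real T < e * real N / 4"
    and e: "e \<le> \<delta>" "e \<le> \<nu> * \<delta>\<^sup>2"
  shows "\<exists>Q. is_AP Q \<and> Q \<subseteq> {1..int N} \<and> card Q = V \<and>
             (1 + \<nu> / 2) * \<delta> \<le> real (card (A \<inter> Q)) / real (card Q)"
proof (rule ccontr)
  assume "\<not> ?thesis"
  then have no_increment: "\<forall>Q. is_AP Q \<longrightarrow> Q \<subseteq> {1..int N} \<longrightarrow> card Q = V \<longrightarrow>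
      real (card (A \<inter> Q)) / real (card Q) < (1 + \<nu>/2) * \<delta>"
    by (auto simp: not_le)
  define f where "f = balanced_fn A \<delta> N"
  define a where "a = smoothing q U V r f"
  define \<eta> where "\<eta> = smoothing_mean_error N q U V T \<rho>"
  have f_range: "- \<delta> \<le> f x \<and> f x \<le> 1" for x using \<delta> by (simp add: f_def balanced_fn_def)
  then have f1: "\<forall>x. \<bar>f x\<bar> \<le> 1" using \<delta> by (simp add: abs_le_iff) (meson order_trans neg_le_iff_le)
  have f0: "\<forall>x. x \<notin> {1..int N} \<longrightarrow> f x = 0" using A by (auto simp: f_def balanced_fn_def)
  have fs: "sum f {1..int N} = 0"
    using sum_balanced_fn[of "{1..int N}" N A \<delta>] A dA N by (simp add: f_def Int_absorb2)
  have range: "\<forall>n\<in>{1..int N}. - \<delta> \<le> a n \<and> a n \<le> 1"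
    unfolding a_def using smoothing_between[OF q r U V, where h=f] f_range by blast
  have good: "\<forall>n\<in>{1..int N}. n + int T \<le> int N \<longrightarrow> a n \<le> \<nu> * \<delta> / 2"
    unfolding a_def f_def using smoothing_le_without_increment[OF q U V r T _ _ no_increment] by auto
  have mean: "\<bar>\<Sum>n\<in>{1..int N}. a n\<bar> \<le> \<eta>"
    unfolding a_def \<eta>_def by (rule sum_smoothing_small[OF f1 f0 fs q r U V \<rho> T])
  have "e * real N / 4 \<le> \<delta> * real N / 4" using e N by (simp add: mult_right_mono)
  moreover have "0 \<le> \<delta> * real N" using \<delta> by simp
  ultimately have small: "\<eta> + real T \<le> \<delta> * real N / 2" using err unfolding \<eta>_def by linarith
  have "(\<Sum>n\<in>{1..int N}. (a n)\<^sup>2) \<le> 3/4 * \<nu> * \<delta>\<^sup>2 * real N + \<eta> + 2 * real T"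
    by (rule sum_squares_bound[OF \<delta> \<nu> range good mean small])
  also have "\<dots> < 3/4 * \<nu> * \<delta>\<^sup>2 * real N + e * real N / 4" using err unfolding \<eta>_def by simp
  also have "e * real N / 4 \<le> \<nu> * \<delta>\<^sup>2 * real N / 4" using e N by (simp add: mult_right_mono)
  finally have "(\<Sum>n\<in>{1..int N}. (a n)\<^sup>2) < \<nu> * \<delta>\<^sup>2 * real N" by (simp add: algebra_simps)
  moreover have "\<nu> * \<delta>\<^sup>2 * real N \<le> (\<Sum>n\<in>{1..int N}. (a n)\<^sup>2)"
  proof -
    have "L2N_sq N (\<lambda>n. a n / \<delta>) = (\<Sum>n\<in>{1..int N}. (a n)\<^sup>2) / (\<delta>\<^sup>2 * real N)"
      unfolding L2N_sq_def by (simp add: power_divide sum_divide_distrib[symmetric])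
    then show ?thesis using L2 \<delta> N unfolding a_def f_def by (simp add: le_divide_eq)
  qed
  ultimately show False by simp
qed

lemma density_increment:
  fixes A :: "int set" and \<epsilon> \<delta> \<nu> cs :: real
  assumes cs: "0 < cs" "cs \<le> 1/8" and \<epsilon>: "0 < \<epsilon>" "\<epsilon> \<le> 1" and \<delta>: "0 < \<delta>" "\<delta> \<le> 1"
    and \<nu>: "0 < \<nu>" and R: "R \<ge> 1"
    and N: "(2 / (\<epsilon> * \<delta>)) powr (16 / cs * real R ^ 3) \<le> real N"
    and lin: "lin_system cs N \<epsilon> \<delta> M R x y q U V r"
    and A: "A \<subseteq> {1..int N}" and dA: "\<delta> = real (card A) / real N"
    and L2: "\<nu> \<le> L2N_sq N (\<lambda>n. smoothing q U V r (balanced_fn A \<delta> N) n / \<delta>)"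
    and \<epsilon>\<nu>: "\<epsilon> \<le> \<nu> * \<delta>"
  shows "\<exists>Q. is_AP Q \<and> Q \<subseteq> {1..int N} \<and>
             (1 + \<nu> / 2) * \<delta> \<le> real (card (A \<inter> Q)) / real (card Q) \<and>
             real N powr (cs\<^sup>2 / real R ^ 3) \<le> real (card Q)"
proof -
  have q: "q \<ge> 1" and U: "U \<ge> 1" and V: "V \<ge> 1" and r: "\<forall>n. r n \<ge> 1"
    and rU: "\<forall>n. real (r n) \<le> real U powr (1/4)"
    using lin unfolding lin_system_def by auto
  have "real U powr (1/4) \<le> real U" using U powr_mono[of "1/4" 1 "real U"] by simp
  then have "\<forall>n. q * r n * V \<le> q * U * V"
    using rU by (metis mult_le_mono1 mult_le_mono2 of_nat_le_iff order_trans)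
  moreover have e: "0 < \<epsilon> * \<delta>" "\<epsilon> * \<delta> \<le> 1" "\<epsilon> * \<delta> \<le> \<delta>" "\<epsilon> * \<delta> \<le> \<nu> * \<delta>\<^sup>2"
    using \<epsilon> \<delta> \<epsilon>\<nu> by (auto simp: mult_le_one power2_eq_square)
  moreover have "N \<ge> 1"
    using N ge_one_powr_ge_zero[of "2 / (\<epsilon> * \<delta>)" "16 / cs * real R ^ 3"] e cs by (simp add: field_simps)
  ultimately obtain Q where "is_AP Q" "Q \<subseteq> {1..int N}" "card Q = V"
      "(1 + \<nu> / 2) * \<delta> \<le> real (card (A \<inter> Q)) / real (card Q)"
    using increment_from_large_smoothing[OF q U V r rU _ A _ dA \<delta> \<nu> L2
        lin_system_mean_error_small[OF cs R lin e(1,2) N]] by blast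
  then show ?thesis using lin_system_length[OF cs(1) R lin] by auto
qed

theorem proposition9p6:
  fixes lams :: "int list" and cs :: real
  assumes "\<forall>l\<in>set lams. l \<noteq> 0"
    and "0 < cs" and "cs \<le> 1/8"
  shows "\<exists>C c c'. C > 0 \<and> c > 0 \<and> c' > 0 \<and>
    (\<forall>(\<epsilon>::real) (\<delta>::real) (\<nu>::real) (R::nat) (N::nat) (M::nat) (x::nat \<Rightarrow> int) (y::nat \<Rightarrow> int)
       (q::nat) (U::nat) (V::nat) (r::int \<Rightarrow> nat) (A::int set).
      0 < \<epsilon> \<longrightarrow> \<epsilon> \<le> 1 \<longrightarrow> 0 < \<delta> \<longrightarrow> \<delta> \<le> 1 \<longrightarrow> \<nu> > 0 \<longrightarrow> R \<ge> 1 \<longrightarrow>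
      prime M \<longrightarrow>
      real (2 * nat (sum_list (map abs lams)) * N) \<le> real M \<longrightarrow>
      real M \<le> 2 * real (2 * nat (sum_list (map abs lams)) * N) \<longrightarrow>
      (\<forall>i\<in>{1..R}. 0 \<le> x i \<and> x i < int M \<and> 0 \<le> y i \<and> y i < int M ^ 2) \<longrightarrow>
      real N \<ge> (2 / (\<epsilon> * \<delta>)) powr (C * real R ^ 3) \<longrightarrow>
      lin_system cs N \<epsilon> \<delta> M R x y q U V r \<longrightarrow>
      A \<subseteq> {1..int N} \<longrightarrow> \<delta> = real (card A) / real N \<longrightarrow>
      L2N_sq N (\<lambda>n. smoothing q U V r (balanced_fn A \<delta> N) n / \<delta>) \<ge> \<nu> \<longrightarrow>
      \<epsilon> \<le> c * \<nu> * \<delta> \<longrightarrow>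
      (\<exists>Q. is_AP Q \<and> Q \<subseteq> {1..int N} \<and>
         real (card (A \<inter> Q)) / real (card Q) \<ge> (1 + \<nu> / 2) * \<delta> \<and>
         real (card Q) \<ge> real N powr (c' / real R ^ 3)))"
  using assms(2) density_increment[OF assms(2,3)]
  by (intro exI[of _ "16 / cs"] exI[of _ 1] exI[of _ "cs\<^sup>2"] conjI allI impI) auto

end
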